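(* Let $(\alpha_{\mathrm p},\alpha_{\mathrm s},\beta_{\mathrm p},\beta_{\mathrm s})\in\mathcal{A}(K,L,T)$ and write $\alpha=(\alpha_{\mathrm p}\mid\alpha_{\mathrm s})=(\alpha_1,\ldots,\alpha_{K+T})$, $\beta=(\beta_{\mathrm p}\mid\beta_{\mathrm s})=(\beta_1,\ldots,\beta_{L+T})$. Then for all $1\le i\le K+T$ and $1\le j\le L+T$, $|(\alpha_i+\operatorname{Set}(\beta_{\mathrm p}))\cap(\operatorname{Set}(\alpha_{\mathrm p})+\beta_j)|\le1$.
   Context: A degree table with parameters $K,L,T$ is a tuple $(\alpha_{\mathrm p},\alpha_{\mathrm s},\beta_{\mathrm p},\beta_{\mathrm s})$ of nonnegative integer vectors of lengths $K,T,L,T$ such that, with $\alpha,\beta$ the concatenations: entries of $\alpha$ are distinct; entries of $\beta$ are distinct; every $n\in\operatorname{Set}(\alpha_{\mathrm p})+\operatorname{Set}(\beta_{\mathrm p})$ has a unique representation $n=i+j$ with $i\in\operatorname{Set}(\alpha)$, $j\in\operatorname{Set}(\beta)$. $\mathcal{A}(K,L,T)$ is the set of degree tables; $\operatorname{Set}(v)$ is the set of entries of $v$, $x+B=\{x+b:b\in B\}$. *)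

theory Defs
  imports Main
begin

definition setsum_nat :: "nat set \<Rightarrow> nat set \<Rightarrow> nat set" where
  "setsum_nat A B = {a + b | a b. a \<in> A \<and> b \<in> B}"

definition degree_table ::
  "nat \<Rightarrow> nat \<Rightarrow> nat \<Rightarrow> nat list \<Rightarrow> nat list \<Rightarrow> nat list \<Rightarrow> nat list \<Rightarrow> bool" where
  "degree_table K L T ap as bp bs \<longleftrightarrow>
     length ap = K \<and> length as = T \<and> length bp = L \<and> length bs = T \<and>
     distinct (ap @ as) \<and> distinct (bp @ bs) \<and>
     (\<forall>n \<in> setsum_nat (set ap) (set bp).
        \<exists>!p. p \<in> set (ap @ as) \<times> set (bp @ bs) \<and> n = fst p + snd p)"

end

theory Submission
  imports Defs
begin

text \<open>If \<open>x + b\<^sub>1 = a\<^sub>1 + y\<close> and \<open>x + b\<^sub>2 = a\<^sub>2 + y\<close>, then \<open>a\<^sub>1 + b\<^sub>2 = a\<^sub>2 + b\<^sub>1\<close> are two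
  representations of one element of \<open>Set(\<alpha>\<^sub>p) + Set(\<beta>\<^sub>p)\<close>; uniqueness of representations
  forces \<open>a\<^sub>1 = a\<^sub>2\<close>, so the two common elements coincide.
  This holds for arbitrary translates \<open>x\<close>, \<open>y\<close>.\<close>

lemma card_translate_inter_le_1:
  fixes A B :: "'a::cancel_comm_monoid_add set"
  assumes cross_sum_inj: "\<And>a\<^sub>1 a\<^sub>2 b\<^sub>1 b\<^sub>2. \<lbrakk>a\<^sub>1 \<in> A; a\<^sub>2 \<in> A; b\<^sub>1 \<in> B; b\<^sub>2 \<in> B; a\<^sub>1 + b\<^sub>2 = a\<^sub>2 + b\<^sub>1\<rbrakk>
      \<Longrightarrow> a\<^sub>1 = a\<^sub>2"
  shows "card ((\<lambda>b. x + b) ` B \<inter> (\<lambda>a. a + y) ` A) \<le> 1"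
proof -
  let ?S = "(\<lambda>b. x + b) ` B \<inter> (\<lambda>a. a + y) ` A"
  have at_most_one: "n\<^sub>1 = n\<^sub>2" if "n\<^sub>1 \<in> ?S" "n\<^sub>2 \<in> ?S" for n\<^sub>1 n\<^sub>2
  proof -
    obtain a\<^sub>1 b\<^sub>1 where 1: "a\<^sub>1 \<in> A" "b\<^sub>1 \<in> B" "n\<^sub>1 = x + b\<^sub>1" "n\<^sub>1 = a\<^sub>1 + y"
      using \<open>n\<^sub>1 \<in> ?S\<close> by auto
    obtain a\<^sub>2 b\<^sub>2 where 2: "a\<^sub>2 \<in> A" "b\<^sub>2 \<in> B" "n\<^sub>2 = x + b\<^sub>2" "n\<^sub>2 = a\<^sub>2 + y"
      using \<open>n\<^sub>2 \<in> ?S\<close> by auto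
    have "(a\<^sub>1 + b\<^sub>2) + (x + y) = (a\<^sub>1 + y) + (x + b\<^sub>2)"
      by (simp add: ac_simps)
    also have "\<dots> = (x + b\<^sub>1) + (a\<^sub>2 + y)"
      using 1 2 by simp
    also have "\<dots> = (a\<^sub>2 + b\<^sub>1) + (x + y)"
      by (simp add: ac_simps)
    finally have "(a\<^sub>1 + b\<^sub>2) + (x + y) = (a\<^sub>2 + b\<^sub>1) + (x + y)" .
    then have "a\<^sub>1 = a\<^sub>2"
      using cross_sum_inj 1 2 by simp
    with 1 2 show ?thesis by simp
  qed
  show ?thesis
  proof (cases "?S = {}")
    case False
    then obtain n where "n \<in> ?S" by blast
    with at_most_one have "?S \<subseteq> {n}" by blast
    then show ?thesis
      using card_mono[of "{n}" ?S] by simp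
  qed simp
qed

lemma degree_table_cross_sum_inj:
  assumes "degree_table K L T ap as bp bs"
    and "a\<^sub>1 \<in> set ap" "a\<^sub>2 \<in> set ap" "b\<^sub>1 \<in> set bp" "b\<^sub>2 \<in> set bp"
    and "a\<^sub>1 + b\<^sub>2 = a\<^sub>2 + b\<^sub>1"
  shows "a\<^sub>1 = a\<^sub>2"
proof -
  have "a\<^sub>1 + b\<^sub>2 \<in> setsum_nat (set ap) (set bp)"
    using assms(2,5) unfolding setsum_nat_def by blast
  then have "\<exists>!p. p \<in> set (ap @ as) \<times> set (bp @ bs) \<and> a\<^sub>1 + b\<^sub>2 = fst p + snd p"
    using assms(1) unfolding degree_table_def by blast
  moreover have "(a\<^sub>1, b\<^sub>2) \<in> set (ap @ as) \<times> set (bp @ bs)"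
    and "(a\<^sub>2, b\<^sub>1) \<in> set (ap @ as) \<times> set (bp @ bs)"
    using assms(2-5) by auto
  ultimately have "(a\<^sub>1, b\<^sub>2) = (a\<^sub>2, b\<^sub>1)"
    using assms(6) by (metis fst_conv snd_conv)
  then show ?thesis by simp
qed

theorem lemma10:
  fixes K L T :: nat and ap as bp bs :: "nat list"
  assumes "degree_table K L T ap as bp bs"
    and "1 \<le> i" "i \<le> K + T" "1 \<le> j" "j \<le> L + T"
  shows "card (((\<lambda>b. (ap @ as) ! (i - 1) + b) ` set bp) \<inter>
               ((\<lambda>a. a + (bp @ bs) ! (j - 1)) ` set ap)) \<le> 1"
  by (rule card_translate_inter_le_1) (rule degree_table_cross_sum_inj[OF assms(1)])

end
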